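(* For every $x\in\mathbb{X}$, with $x^+=f(x,\kappa(x))$, one has $V(x^+)\le V(x)-l(x,\kappa(x))$.
   Context: Consider the discrete-time controlled system $x^+=f(x,u)$ with state $x\in\mathbb{R}^{n}$ and control $u\in\mathbb{R}^{m}$, constraint sets $\mathbb{X}\subset\mathbb{R}^n$, $\mathbb{U}\subset\mathbb{R}^m$, $\mathbb{Y}\subset\mathbb{R}^p$, and a constraint function $h(x,u)\in\mathbb{R}^p$. A control $u$ is feasible at $x\in\mathbb{X}$ if $u\in\mathbb{U}$, $f(x,u)\in\mathbb{X}$ and $h(x,u)\in\mathbb{Y}$. A control sequence $(u(0),\ldots,u(N-1))$ is feasible from $x$ if, for the state sequence defined by $x(0)=x$ and $x(k+1)=f(x(k),u(k))$, each $u(k)$ is feasible at $x(k)$. We are given a stage cost $l(x,u)$, a terminal set $\mathbb{X}_f$ and a terminal cost $V_f$ defined on $\mathbb{X}_f$. Horizon-$N$ problem at $x$: minimize $\sum_{k=0}^{N-1}l(x(k),u(k))+V_f(x(N))$ over control sequences that are feasible from $x$ and satisfy $x(N)\in\mathbb{X}_f$. Let $V_N^0(x)$ be its minimum value, which is assumed to be attained whenever the feasible set is nonempty. Let $(u^0_N(0),\ldots,u^0_N(N-1))$ be a minimizer, and set $\kappa_N(x)=u_N^0(0)$. For $N=0$, $V_0^0(x)=V_f(x)$ for $x\in\mathbb{X}_f$. Standing assumptions: (A1) $f,l,h,V_f$ are continuous on an open set containing $\mathbb{X}\times\mathbb{U}$ (for $V_f$, an open set containing $\mathbb{X}_f$).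 The stage cost $l$ is nonnegative definite in $(x,u)$ and positive definite in $u$. $V_f$ is positive definite on $\mathbb{X}_f$. Moreover $f(0,0)=0$, $l(0,0)=0$ and $V_f(0)=0$. (A2) $\mathbb{X}$ and $\mathbb{X}_f$ are closed, $\mathbb{X}_f\subset\mathbb{X}$, $\mathbb{U}$ is compact, and $\mathbb{X},\mathbb{X}_f,\mathbb{U}$ each contain a neighborhood of the origin. (A3) For every $x\in\mathbb{X}_f$ there is a control $u$ feasible at $x$ with $f(x,u)\in\mathbb{X}_f$ and $l(x,u)+V_f(f(x,u))\le V_f(x)$. (A4) For every $x\in\mathbb{X}$ there exist an integer $N\ge0$ and a feasible control sequence of length $N$ from $x$ whose state sequence satisfies $x(N)\in\mathbb{X}_f$. For $x\in\mathbb{X}$, $N(x)$ denotes the minimum such $N$. (A5) There is an integer $M\ge 0$ with $N(x)\le M$ for all $x\in\mathbb{X}$. Define $V(x)=V^0_{N(x)}(x)$ for $x\in\mathbb{X}$. For $N(x)\ge1$ set $\kappa(x)=\kappa_{N(x)}(x)$. For $N(x)=0$ (equivalently $x\in\mathbb{X}_f$), let $\kappa(x)$ be a feasible control $u$ as in (A3). *)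

theory Defs
  imports "HOL-Analysis.Analysis"
begin

text \<open>Control sequences are functions nat => 'u; only the first N
values matter for the horizon-N problem.\<close>

definition feasible_ctrl ::
  "('x \<Rightarrow> 'u \<Rightarrow> 'x) \<Rightarrow> ('x \<Rightarrow> 'u \<Rightarrow> 'y) \<Rightarrow> 'x set \<Rightarrow> 'u set \<Rightarrow> 'y set \<Rightarrow> 'x \<Rightarrow> 'u \<Rightarrow> bool"
  where "feasible_ctrl f h X U Y x u \<longleftrightarrow> u \<in> U \<and> f x u \<in> X \<and> h x u \<in> Y"

fun traj :: "('x \<Rightarrow> 'u \<Rightarrow> 'x) \<Rightarrow> 'x \<Rightarrow> (nat \<Rightarrow> 'u) \<Rightarrow> nat \<Rightarrow> 'x" where
  "traj f x us 0 = x"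
| "traj f x us (Suc k) = f (traj f x us k) (us k)"

definition feasible_seq ::
  "('x \<Rightarrow> 'u \<Rightarrow> 'x) \<Rightarrow> ('x \<Rightarrow> 'u \<Rightarrow> 'y) \<Rightarrow> 'x set \<Rightarrow> 'u set \<Rightarrow> 'y set \<Rightarrow> nat \<Rightarrow> 'x \<Rightarrow> (nat \<Rightarrow> 'u) \<Rightarrow> bool"
  where "feasible_seq f h X U Y N x us \<longleftrightarrow>
           (\<forall>k<N. feasible_ctrl f h X U Y (traj f x us k) (us k))"

definition admissible ::
  "('x \<Rightarrow> 'u \<Rightarrow> 'x) \<Rightarrow> ('x \<Rightarrow> 'u \<Rightarrow> 'y) \<Rightarrow> 'x set \<Rightarrow> 'u set \<Rightarrow> 'y set \<Rightarrow> 'x set \<Rightarrow> nat \<Rightarrow> 'x \<Rightarrow> (nat \<Rightarrow> 'u) \<Rightarrow> bool"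
  where "admissible f h X U Y Xf N x us \<longleftrightarrow>
           feasible_seq f h X U Y N x us \<and> traj f x us N \<in> Xf"

definition cost ::
  "('x \<Rightarrow> 'u \<Rightarrow> 'x) \<Rightarrow> ('x \<Rightarrow> 'u \<Rightarrow> real) \<Rightarrow> ('x \<Rightarrow> real) \<Rightarrow> nat \<Rightarrow> 'x \<Rightarrow> (nat \<Rightarrow> 'u) \<Rightarrow> real"
  where "cost f l Vf N x us = (\<Sum>k<N. l (traj f x us k) (us k)) + Vf (traj f x us N)"

text \<open>Optimal value V_N^0(x) of the horizon-N problem (infimum; attained by assumption).\<close>
definition VN ::
  "('x \<Rightarrow> 'u \<Rightarrow> 'x) \<Rightarrow> ('x \<Rightarrow> 'u \<Rightarrow> 'y) \<Rightarrow> ('x \<Rightarrow> 'u \<Rightarrow> real) \<Rightarrow> ('x \<Rightarrow> real) \<Rightarrow>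
     'x set \<Rightarrow> 'u set \<Rightarrow> 'y set \<Rightarrow> 'x set \<Rightarrow> nat \<Rightarrow> 'x \<Rightarrow> real"
  where "VN f h l Vf X U Y Xf N x =
           Inf {cost f l Vf N x us | us. admissible f h X U Y Xf N x us}"

definition is_minimizer ::
  "('x \<Rightarrow> 'u \<Rightarrow> 'x) \<Rightarrow> ('x \<Rightarrow> 'u \<Rightarrow> 'y) \<Rightarrow> ('x \<Rightarrow> 'u \<Rightarrow> real) \<Rightarrow> ('x \<Rightarrow> real) \<Rightarrow>
     'x set \<Rightarrow> 'u set \<Rightarrow> 'y set \<Rightarrow> 'x set \<Rightarrow> nat \<Rightarrow> 'x \<Rightarrow> (nat \<Rightarrow> 'u) \<Rightarrow> bool"
  where "is_minimizer f h l Vf X U Y Xf N x us \<longleftrightarrow>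
           admissible f h X U Y Xf N x us \<and>
           (\<forall>vs. admissible f h X U Y Xf N x vs \<longrightarrow> cost f l Vf N x us \<le> cost f l Vf N x vs)"

definition Nmin ::
  "('x \<Rightarrow> 'u \<Rightarrow> 'x) \<Rightarrow> ('x \<Rightarrow> 'u \<Rightarrow> 'y) \<Rightarrow> 'x set \<Rightarrow> 'u set \<Rightarrow> 'y set \<Rightarrow> 'x set \<Rightarrow> 'x \<Rightarrow> nat"
  where "Nmin f h X U Y Xf x = (LEAST N. \<exists>us. admissible f h X U Y Xf N x us)"

definition Vfun ::
  "('x \<Rightarrow> 'u \<Rightarrow> 'x) \<Rightarrow> ('x \<Rightarrow> 'u \<Rightarrow> 'y) \<Rightarrow> ('x \<Rightarrow> 'u \<Rightarrow> real) \<Rightarrow> ('x \<Rightarrow> real) \<Rightarrow>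
     'x set \<Rightarrow> 'u set \<Rightarrow> 'y set \<Rightarrow> 'x set \<Rightarrow> 'x \<Rightarrow> real"
  where "Vfun f h l Vf X U Y Xf x = VN f h l Vf X U Y Xf (Nmin f h X U Y Xf x) x"

definition standing_assumptions ::
  "('x::euclidean_space \<Rightarrow> 'u::euclidean_space \<Rightarrow> 'x) \<Rightarrow> ('x \<Rightarrow> 'u \<Rightarrow> 'y::euclidean_space) \<Rightarrow>
     ('x \<Rightarrow> 'u \<Rightarrow> real) \<Rightarrow> ('x \<Rightarrow> real) \<Rightarrow> 'x set \<Rightarrow> 'u set \<Rightarrow> 'y set \<Rightarrow> 'x set \<Rightarrow> bool"
  where "standing_assumptions f h l Vf X U Y Xf \<longleftrightarrow>
    \<comment> \<open>(A1)\<close>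
    (\<exists>S. open S \<and> X \<times> U \<subseteq> S \<and>
         continuous_on S (\<lambda>(x, u). f x u) \<and>
         continuous_on S (\<lambda>(x, u). l x u) \<and>
         continuous_on S (\<lambda>(x, u). h x u)) \<and>
    (\<exists>T. open T \<and> Xf \<subseteq> T \<and> continuous_on T Vf) \<and>
    (\<forall>x\<in>X. \<forall>u\<in>U. l x u \<ge> 0) \<and>
    (\<forall>x\<in>X. \<forall>u\<in>U. u \<noteq> 0 \<longrightarrow> l x u > 0) \<and>
    (\<forall>x\<in>Xf. x \<noteq> 0 \<longrightarrow> Vf x > 0) \<and>
    f 0 0 = 0 \<and> l 0 0 = 0 \<and> Vf 0 = 0 \<and>
    \<comment> \<open>(A2)\<close>
    closed X \<and> closed Xf \<and> Xf \<subseteq> X \<and> compact U \<and>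
    0 \<in> interior X \<and> 0 \<in> interior Xf \<and> 0 \<in> interior U \<and>
    \<comment> \<open>(A3)\<close>
    (\<forall>x\<in>Xf. \<exists>u. feasible_ctrl f h X U Y x u \<and> f x u \<in> Xf \<and> l x u + Vf (f x u) \<le> Vf x) \<and>
    \<comment> \<open>(A4)\<close>
    (\<forall>x\<in>X. \<exists>N us. admissible f h X U Y Xf N x us) \<and>
    \<comment> \<open>(A5)\<close>
    (\<exists>M. \<forall>x\<in>X. Nmin f h X U Y Xf x \<le> M)"

end

theory Submission
  imports Defs
begin

text \<open>If \<open>u\<^sub>0, \<dots>, u\<^sub>N\<^sub>-\<^sub>1\<close> is optimal from \<open>x\<close> at the minimal horizon \<open>N = N(x) \<ge> 1\<close>,
  its tail \<open>u\<^sub>1, \<dots>, u\<^sub>N\<^sub>-\<^sub>1\<close> is admissible from \<open>x\<^sup>+ = f x u\<^sub>0\<close> at horizon \<open>N - 1\<close>, and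
  \<open>N(x\<^sup>+) = N - 1\<close> because prefixing \<open>u\<^sub>0\<close> to a shorter admissible sequence from \<open>x\<^sup>+\<close>
  would contradict the minimality of \<open>N(x)\<close>. Hence \<open>V(x\<^sup>+) = V\<^sub>N\<^sub>-\<^sub>1\<^sup>0(x\<^sup>+)\<close> is at most the
  cost of the tail, which is \<open>V(x) - l(x, u\<^sub>0)\<close>. If \<open>N(x) = 0\<close>, then \<open>x, x\<^sup>+ \<in> X\<^sub>f\<close>, \<open>V = V\<^sub>f\<close>
  at both points, and the claim is the terminal decrease condition (A3).\<close>

lemma traj_shift: "traj f (f x (us 0)) (\<lambda>k. us (Suc k)) k = traj f x us (Suc k)"
  by (induction k) auto

lemma admissible_tail:
  assumes "admissible f h X U Y Xf (Suc n) x us"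
  shows "admissible f h X U Y Xf n (f x (us 0)) (\<lambda>k. us (Suc k))"
  using assms unfolding admissible_def feasible_seq_def
  by (auto simp: traj_shift simp del: traj.simps(2))

lemma admissible_Cons:
  assumes "admissible f h X U Y Xf n (f x u) ws" and "feasible_ctrl f h X U Y x u"
  shows "admissible f h X U Y Xf (Suc n) x (case_nat u ws)"
proof -
  have "traj f x (case_nat u ws) (Suc k) = traj f (f x u) ws k" for k
    using traj_shift[of f x "case_nat u ws" k] by simp
  with assms show ?thesis
    unfolding admissible_def feasible_seq_def
    by (auto simp: less_Suc_eq_0_disj simp del: traj.simps(2))
qed

lemma admissible_0_iff: "admissible f h X U Y Xf 0 x us \<longleftrightarrow> x \<in> Xf"
  by (simp add: admissible_def feasible_seq_def)

lemma admissible_Suc_feasible_ctrl: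
  "admissible f h X U Y Xf (Suc n) x us \<Longrightarrow> feasible_ctrl f h X U Y x (us 0)"
  unfolding admissible_def feasible_seq_def by (metis traj.simps(1) zero_less_Suc)

lemma cost_Suc:
  "cost f l Vf (Suc n) x us = l x (us 0) + cost f l Vf n (f x (us 0)) (\<lambda>k. us (Suc k))"
  unfolding cost_def sum.lessThan_Suc_shift
  by (simp add: traj_shift del: traj.simps(2))

lemma VN_eq_cost_minimizer:
  assumes "is_minimizer f h l Vf X U Y Xf N x us"
  shows "VN f h l Vf X U Y Xf N x = cost f l Vf N x us"
  unfolding VN_def
  by (rule cInf_eq_minimum) (use assms in \<open>auto simp: is_minimizer_def\<close>)

lemma VN_0:
  assumes "x \<in> Xf"
  shows "VN f h l Vf X U Y Xf 0 x = Vf x"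
proof -
  have "is_minimizer f h l Vf X U Y Xf 0 x us" for us
    using assms by (simp add: is_minimizer_def admissible_0_iff cost_def)
  then show ?thesis
    using VN_eq_cost_minimizer by (fastforce simp: cost_def)
qed

lemma Nmin_le: "admissible f h X U Y Xf N x us \<Longrightarrow> Nmin f h X U Y Xf x \<le> N"
  unfolding Nmin_def by (rule Least_le) blast

lemma admissible_Nmin:
  assumes "admissible f h X U Y Xf N x us"
  obtains ws where "admissible f h X U Y Xf (Nmin f h X U Y Xf x) x ws"
  using LeastI_ex[of "\<lambda>N. \<exists>us. admissible f h X U Y Xf N x us"] assms
  unfolding Nmin_def by blast

lemma Nmin_eq_0_iff:
  assumes "admissible f h X U Y Xf N x us"
  shows "Nmin f h X U Y Xf x = 0 \<longleftrightarrow> x \<in> Xf"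
  using admissible_Nmin[OF assms] Nmin_le[of f h X U Y Xf 0 x]
  by (metis admissible_0_iff le_zero_eq)

lemma Nmin_successor:
  assumes adm: "admissible f h X U Y Xf (Suc m) x us"
    and N: "Nmin f h X U Y Xf x = Suc m"
  shows "Nmin f h X U Y Xf (f x (us 0)) = m"
proof -
  have tail: "admissible f h X U Y Xf m (f x (us 0)) (\<lambda>k. us (Suc k))"
    using admissible_tail[OF adm] .
  obtain ws where "admissible f h X U Y Xf (Nmin f h X U Y Xf (f x (us 0))) (f x (us 0)) ws"
    using admissible_Nmin[OF tail] .
  then have "Suc m \<le> Suc (Nmin f h X U Y Xf (f x (us 0)))"
    using Nmin_le[OF admissible_Cons] admissible_Suc_feasible_ctrl[OF adm] N by metis
  with Nmin_le[OF tail] show ?thesis by simp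
qed

lemma Vfun_terminal:
  "x \<in> Xf \<Longrightarrow> Vfun f h l Vf X U Y Xf x = Vf x"
  unfolding Vfun_def using Nmin_eq_0_iff[of f h X U Y Xf 0 x] VN_0
  by (metis admissible_0_iff)

lemma Vfun_decrease_minimizer:
  assumes opt: "is_minimizer f h l Vf X U Y Xf (Suc m) x us"
    and N: "Nmin f h X U Y Xf x = Suc m"
    and attained: "\<exists>ws. is_minimizer f h l Vf X U Y Xf m (f x (us 0)) ws"
  shows "Vfun f h l Vf X U Y Xf (f x (us 0)) \<le> Vfun f h l Vf X U Y Xf x - l x (us 0)"
proof -
  have adm: "admissible f h X U Y Xf (Suc m) x us"
    using opt by (simp add: is_minimizer_def)
  obtain ws where ws: "is_minimizer f h l Vf X U Y Xf m (f x (us 0)) ws"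
    using attained ..
  have "Vfun f h l Vf X U Y Xf (f x (us 0)) = VN f h l Vf X U Y Xf m (f x (us 0))"
    unfolding Vfun_def Nmin_successor[OF adm N] ..
  also have "\<dots> = cost f l Vf m (f x (us 0)) ws"
    using VN_eq_cost_minimizer[OF ws] .
  also have "\<dots> \<le> cost f l Vf m (f x (us 0)) (\<lambda>k. us (Suc k))"
    using ws admissible_tail[OF adm] by (simp add: is_minimizer_def)
  also have "\<dots> = cost f l Vf (Suc m) x us - l x (us 0)"
    by (simp add: cost_Suc)
  also have "\<dots> = Vfun f h l Vf X U Y Xf x - l x (us 0)"
    unfolding Vfun_def N VN_eq_cost_minimizer[OF opt] ..
  finally show ?thesis .
qed

theorem lemma2:
  fixes f :: "'x::euclidean_space \<Rightarrow> 'u::euclidean_space \<Rightarrow> 'x"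
    and h :: "'x \<Rightarrow> 'u \<Rightarrow> 'y::euclidean_space"
    and l :: "'x \<Rightarrow> 'u \<Rightarrow> real"
    and Vf :: "'x \<Rightarrow> real"
    and X :: "'x set" and U :: "'u set" and Y :: "'y set" and Xf :: "'x set"
    and \<kappa> :: "'x \<Rightarrow> 'u"
  assumes std: "standing_assumptions f h l Vf X U Y Xf"
    and attained: "\<And>N x. x \<in> X \<Longrightarrow> (\<exists>us. admissible f h X U Y Xf N x us) \<Longrightarrow>
                     (\<exists>us. is_minimizer f h l Vf X U Y Xf N x us)"
    and kappa_pos: "\<And>x. x \<in> X \<Longrightarrow> Nmin f h X U Y Xf x \<ge> 1 \<Longrightarrow>
                     (\<exists>us. is_minimizer f h l Vf X U Y Xf (Nmin f h X U Y Xf x) x us \<and> \<kappa> x = us 0)"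
    and kappa_zero: "\<And>x. x \<in> X \<Longrightarrow> Nmin f h X U Y Xf x = 0 \<Longrightarrow>
                     feasible_ctrl f h X U Y x (\<kappa> x) \<and> f x (\<kappa> x) \<in> Xf \<and>
                     l x (\<kappa> x) + Vf (f x (\<kappa> x)) \<le> Vf x"
    and x: "x \<in> X"
  shows "Vfun f h l Vf X U Y Xf (f x (\<kappa> x)) \<le> Vfun f h l Vf X U Y Xf x - l x (\<kappa> x)"
proof (cases "Nmin f h X U Y Xf x")
  case 0
  obtain N us where "admissible f h X U Y Xf N x us"
    using std x unfolding standing_assumptions_def by blast
  with 0 have "x \<in> Xf" by (simp add: Nmin_eq_0_iff)
  with 0 kappa_zero[OF x] show ?thesis by (simp add: Vfun_terminal)
next
  case (Suc m)
  then obtain us where opt: "is_minimizer f h l Vf X U Y Xf (Suc m) x us" and "\<kappa> x = us 0"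
    using kappa_pos[OF x] by auto
  moreover have adm: "admissible f h X U Y Xf (Suc m) x us"
    using opt by (simp add: is_minimizer_def)
  moreover have "f x (us 0) \<in> X"
    using admissible_Suc_feasible_ctrl[OF adm] by (simp add: feasible_ctrl_def)
  ultimately show ?thesis
    using Vfun_decrease_minimizer[OF opt Suc] attained admissible_tail by metis
qed

end
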